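(* Let $N\in\mathbb{N}$ be odd and either prime or divisible by at least two distinct primes. Let $b\in\mathbb{Z}$ and $f\in\mathbb{Z}[X]$ with $f(b)=N$, let $d:=\deg f$, and suppose $d$ is smaller than $q:=\max\{q'\text{ prime}:q'\mid N\}$ and $\gcd(\mathrm{lc}(f),N)=1$, where $\mathrm{lc}(f)$ is the leading coefficient of $f$. Then \[N\text{ is prime}\iff \forall x\in\{0,\dots,N-1\}:\ f(x)^{(N-1)/2}\bmod N\in\{-1,0,1\}\] (where $-1$ denotes the residue $N-1$). *)

theory Defs
  imports "HOL-Computational_Algebra.Computational_Algebra"
begin

end

theory Submission
  imports Defs "HOL-Number_Theory.Number_Theory"
begin

text \<open>
  For prime \<open>N\<close> the test is Euler's criterion. Conversely, let \<open>p \<noteq> q\<close> be prime factors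
  of \<open>N\<close> with \<open>q\<close> the largest one. Since \<open>deg f < q\<close> and \<open>q\<close> does not divide the leading
  coefficient, \<open>f\<close> has a non-root \<open>a\<close> modulo \<open>q\<close>, while \<open>b\<close> is a root modulo \<open>p\<close>. A common
  lift \<open>x < N\<close> of \<open>b mod p\<close> and \<open>a mod q\<close> makes \<open>f(x)^((N-1)/2)\<close> divisible by \<open>p\<close>
  but not by \<open>q\<close>, and no such number is congruent to \<open>-1\<close>, \<open>0\<close> or \<open>1\<close> modulo \<open>N\<close>.
\<close>

lemma cong_poly:
  fixes f :: "'a::unique_euclidean_semiring poly"
  assumes "[x = y] (mod m)"
  shows "[poly f x = poly f y] (mod m)"
  by (induction f) (simp_all add: cong_add cong_mult assms)

lemma power_half_mod_prime:
  fixes p :: nat and a :: int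
  assumes "prime p" "odd p"
  shows "a ^ ((p - 1) div 2) mod int p \<in> {int p - 1, 0, 1}"
proof -
  have "2 < p"
    using assms prime_ge_2_nat[OF assms(1)] by (metis le_neq_implies_less dvd_refl)
  then have "[Legendre a (int p) = a ^ ((p - 1) div 2)] (mod int p)"
    using euler_criterion assms(1) by blast
  then have "a ^ ((p - 1) div 2) mod int p = Legendre a (int p) mod int p"
    by (simp add: cong_def)
  moreover have "int p > 1"
    using \<open>2 < p\<close> by simp
  ultimately show ?thesis
    by (auto simp: Legendre_def zmod_minus1)
qed

lemma card_roots_mod_prime_le_degree:
  fixes q :: nat and f :: "int poly" and S :: "int set"
  assumes "prime q" "\<not> int q dvd lead_coeff f" "S \<subseteq> {0..<int q}"
    and "\<forall>a\<in>S. int q dvd poly f a"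
  shows "card S \<le> degree f"
  using assms(2-4)
proof (induction "degree f" arbitrary: f S)
  case 0
  then have "poly f a = lead_coeff f" for a
    by (metis degree_eq_zeroE lead_coeff_pCons(2) pCons_0_0 poly_const_conv)
  then show ?case
    using "0.prems"(1,3) by (cases "S = {}") auto
next
  case (Suc n)
  show ?case
  proof (cases "S = {}")
    case False
    then obtain a where a: "a \<in> S" by blast
    define g where "g = synthetic_div f a"
    have f_eq: "f = [:poly f a:] + [:-a, 1:] * g"
      unfolding g_def using synthetic_div_correct'[of a f] by (simp add: add.commute)
    have deg_g: "degree g = n"
      unfolding g_def using Suc.hyps(2) by (simp add: degree_synthetic_div)
    have "g \<noteq> 0"
      unfolding g_def using Suc.hyps(2) by (simp add: synthetic_div_eq_0_iff)
    then have "degree [:poly f a:] < degree ([:-a, 1:] * g)"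
      using deg_g degree_mult_eq[of "[:-a, 1:]" g] by (simp del: mult_pCons_left)
    then have "lead_coeff ([:poly f a:] + [:-a, 1:] * g) = lead_coeff ([:-a, 1:] * g)"
      by (rule lead_coeff_add_le)
    then have "lead_coeff f = lead_coeff ([:-a, 1:] * g)"
      by (simp only: f_eq[symmetric])
    then have lc_g: "lead_coeff g = lead_coeff f"
      by (simp add: lead_coeff_mult del: mult_pCons_left)
    have "int q dvd poly g a'" if a': "a' \<in> S - {a}" for a'
    proof -
      have "poly f a' = (a' - a) * poly g a' + poly f a"
        by (subst f_eq) (simp add: algebra_simps)
      then have "int q dvd (a' - a) * poly g a'"
        using a' a Suc.prems(3) by (metis DiffD1 add_diff_cancel_right' dvd_diff)
      moreover have "\<not> int q dvd a' - a"
      proof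
        assume "int q dvd a' - a"
        moreover have "a \<in> {0..<int q}" "a' \<in> {0..<int q}" "a' \<noteq> a"
          using a' a Suc.prems(2) by auto
        ultimately have "int q \<le> \<bar>a' - a\<bar>"
          using dvd_imp_le_int[of "a' - a" "int q"] by simp
        with \<open>a \<in> {0..<int q}\<close> \<open>a' \<in> {0..<int q}\<close> show False
          by auto
      qed
      ultimately show ?thesis
        using assms(1) by (simp add: prime_dvd_mult_iff)
    qed
    then have "card (S - {a}) \<le> n"
      using Suc.hyps(1)[of g "S - {a}"] deg_g lc_g Suc.prems(1,2) by auto
    moreover have "finite S"
      using Suc.prems(2) finite_subset by blast
    ultimately show ?thesis
      using a Suc.hyps(2) by (simp add: card_Diff1_le card_Suc_Diff1)
  qed simp
qed

lemma exists_nonroot_mod_prime: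
  fixes q :: nat and f :: "int poly"
  assumes "prime q" "\<not> int q dvd lead_coeff f" "degree f < q"
  shows "\<exists>a. \<not> int q dvd poly f a"
  using card_roots_mod_prime_le_degree[OF assms(1,2), of "{0..<int q}"] assms(3) by auto

lemma chinese_remainder_below:
  fixes m n N :: nat and u v :: int
  assumes "coprime m n" "m * n dvd N" "N \<noteq> 0"
  shows "\<exists>x<N. [int x = u] (mod int m) \<and> [int x = v] (mod int n)"
proof -
  obtain y where y: "[y = u] (mod int m)" "[y = v] (mod int n)"
    using binary_chinese_remainder_int[of "int m" "int n"] assms(1) by auto
  define x where "x = nat (y mod (int m * int n))"
  have "m * n \<noteq> 0" "m * n \<le> N"
    using assms(2,3) dvd_imp_le by auto
  then have x_int: "int x = y mod (int m * int n)"
    unfolding x_def by simp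
  also have "\<dots> < int m * int n"
    using \<open>m * n \<noteq> 0\<close> by simp
  finally have "x < m * n"
    by (simp flip: of_nat_mult)
  then have "x < N"
    using \<open>m * n \<le> N\<close> by linarith
  moreover have "[int x = y] (mod int m)" "[int x = y] (mod int n)"
    unfolding x_int cong_def by (simp_all add: mod_mod_cancel)
  ultimately show ?thesis
    using y cong_trans by blast
qed

lemma mod_notin_minus_one_zero_one:
  fixes t :: int and N p q :: nat
  assumes "p dvd N" "q dvd N" "p > 1" "int p dvd t" "\<not> int q dvd t"
  shows "t mod int N \<notin> {int N - 1, 0, 1}"
proof -
  have "int p dvd t mod int N" "\<not> int q dvd t mod int N"
    using assms by (simp_all add: dvd_mod_iff)
  moreover have "\<not> int p dvd int N - 1"
  proof
    assume "int p dvd int N - 1"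
    moreover have "int p dvd int N"
      using assms(1) by simp
    ultimately have "int p dvd int N - (int N - 1)"
      by (rule dvd_diff[rotated])
    with assms(3) show False
      by simp
  qed
  ultimately show ?thesis
    using assms(3) by auto
qed

lemma euler_test_fails_if_composite:
  fixes N p q :: nat and b :: int and f :: "int poly"
  assumes "p \<in> prime_factors N" "q \<in> prime_factors N" "p \<noteq> q"
    and "int p dvd poly f b" "coprime (lead_coeff f) (int N)" "degree f < q"
  shows "\<exists>x\<in>{0..<N}. poly f (int x) ^ ((N - 1) div 2) mod int N \<notin> {int N - 1, 0, 1}"
proof -
  have p: "prime p" "p dvd N" and q: "prime q" "q dvd N" and "N \<noteq> 0"
    using assms(1,2) by (auto simp: in_prime_factors_iff)
  have "\<not> int q dvd lead_coeff f"
  proof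
    assume "int q dvd lead_coeff f"
    from coprime_common_divisor[OF assms(5) this] q(2) have "is_unit (int q)"
      by simp
    with q(1) show False
      by simp
  qed
  then obtain a where a: "\<not> int q dvd poly f a"
    using exists_nonroot_mod_prime q(1) assms(6) by blast
  have "coprime p q"
    using p(1) q(1) assms(3) by (simp add: primes_coprime)
  moreover have pq_dvd: "p * q dvd N"
    using p q \<open>coprime p q\<close> by (simp add: divides_mult)
  ultimately obtain x where "x < N" and x: "[int x = b] (mod int p)" "[int x = a] (mod int q)"
    using chinese_remainder_below \<open>N \<noteq> 0\<close> by blast
  have "2 * 2 \<le> p * q"
    using prime_ge_2_nat[OF p(1)] prime_ge_2_nat[OF q(1)] by (rule mult_le_mono)
  moreover have "p * q \<le> N"
    using pq_dvd \<open>N \<noteq> 0\<close> by (simp add: dvd_imp_le)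
  ultimately have "4 \<le> N"
    by linarith
  then have "(N - 1) div 2 \<noteq> 0"
    by presburger
  then have fx_dvd: "poly f (int x) dvd poly f (int x) ^ ((N - 1) div 2)"
    by (simp add: dvd_power)
  have "int p dvd poly f (int x)"
    using cong_poly[OF x(1), of f] assms(4) cong_dvd_iff by blast
  then have "int p dvd poly f (int x) ^ ((N - 1) div 2)"
    using fx_dvd by (rule dvd_trans)
  moreover have "\<not> int q dvd poly f (int x)"
    using cong_poly[OF x(2), of f] a cong_dvd_iff by blast
  then have "\<not> int q dvd poly f (int x) ^ ((N - 1) div 2)"
    using prime_dvd_power[of "int q"] q(1) by auto
  ultimately have "poly f (int x) ^ ((N - 1) div 2) mod int N \<notin> {int N - 1, 0, 1}"
    by (rule mod_notin_minus_one_zero_one[OF p(2) q(2) prime_gt_1_nat[OF p(1)]])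
  moreover have "x \<in> {0..<N}"
    using \<open>x < N\<close> by simp
  ultimately show ?thesis
    by blast
qed

theorem corollary5p2:
  fixes N :: nat and b :: int and f :: "int poly"
  assumes "odd N"
    and "prime N \<or> card (prime_factors N) \<ge> 2"
    and "poly f b = int N"
    and "degree f < Max (prime_factors N)"
    and "coprime (lead_coeff f) (int N)"
  shows "prime N \<longleftrightarrow>
    (\<forall>x\<in>{0..<N}. (poly f (int x)) ^ ((N - 1) div 2) mod int N \<in> {int N - 1, 0, 1})"
proof
  assume "prime N"
  then show "\<forall>x\<in>{0..<N}. poly f (int x) ^ ((N - 1) div 2) mod int N \<in> {int N - 1, 0, 1}"
    using power_half_mod_prime assms(1) by blast
next
  assume test: "\<forall>x\<in>{0..<N}. poly f (int x) ^ ((N - 1) div 2) mod int N \<in> {int N - 1, 0, 1}"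
  show "prime N"
  proof (rule ccontr)
    assume "\<not> prime N"
    then have two: "card (prime_factors N) \<ge> 2"
      using assms(2) by simp
    define q where "q = Max (prime_factors N)"
    have q: "q \<in> prime_factors N"
      unfolding q_def using two by (intro Max_in) auto
    have "\<not> prime_factors N \<subseteq> {q}"
      using two card_mono[of "{q}" "prime_factors N"] by auto
    then obtain p where p: "p \<in> prime_factors N" "p \<noteq> q"
      by blast
    have "int p dvd poly f b"
      using assms(3) p(1) by (simp add: in_prime_factors_iff)
    then show False
      using euler_test_fails_if_composite[OF p(1) q p(2)] assms(4,5) test unfolding q_def by blast
  qed
qed

end
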